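(* If a completely simple semigroup $S=(G,P,\Lambda,I)$ is an equational domain in the language $\mathcal{L}_S$, then its structural group $G$ is an equational domain in the group language $\mathcal{L}_G$.
   Context: Rees representation: a completely simple semigroup $S=(G,P,\Lambda,I)$ is given by a group $G$ (the structural group), index sets $\Lambda,I$ (each containing an element $1$), and a matrix $P=(p_{i\lambda})_{i\in I,\lambda\in\Lambda}$ over $G$ normalised so that $p_{1\lambda}=p_{i1}=1_G$; elements are triples $(\lambda,g,i)$ with product $(\lambda,g,i)(\mu,h,j)=(\lambda,gp_{i\mu}h,j)$ and inversion $(\lambda,g,i)^{-1}=(\lambda,p_{i\lambda}^{-1}g^{-1}p_{i\lambda}^{-1},i)$. The language $\mathcal{L}_S$ is $\{\cdot,{}^{-1}\}$ plus a constant for each element of $S$; the group language $\mathcal{L}_G$ is $\{\cdot,{}^{-1},1\}$ plus a constant for each element of $G$ (so equations over $G$ are equalities $w(X)=1$ with $w\in F(X)*G$). For either structure: an equation is an equality of two terms, a system is a set of equations, an algebraic set is the solution set of a system, and the structure is an equational domain (e.d.) if every finite union of algebraic sets is algebraic. *)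

theory Defs
  imports "HOL-Algebra.Group"
begin

text \<open>Elements of S = (G,P,Lambda,I) are triples (lambda, g, i), encoded as nested pairs.
  The sandwich matrix is P i lambda = p_{i lambda}.\<close>

definition rees_carrier ::
  "('g, 'b) monoid_scheme \<Rightarrow> 'l set \<Rightarrow> 'i set \<Rightarrow> ('l \<times> 'g \<times> 'i) set" where
  "rees_carrier G Lam I = Lam \<times> (carrier G \<times> I)"

definition rees_mult ::
  "('g, 'b) monoid_scheme \<Rightarrow> ('i \<Rightarrow> 'l \<Rightarrow> 'g) \<Rightarrow> ('l \<times> 'g \<times> 'i) \<Rightarrow> ('l \<times> 'g \<times> 'i) \<Rightarrow> ('l \<times> 'g \<times> 'i)" where
  "rees_mult G P x y = (case x of (l, g, i) \<Rightarrow> case y of (m, h, j) \<Rightarrow>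
      (l, g \<otimes>\<^bsub>G\<^esub> P i m \<otimes>\<^bsub>G\<^esub> h, j))"

definition rees_inv ::
  "('g, 'b) monoid_scheme \<Rightarrow> ('i \<Rightarrow> 'l \<Rightarrow> 'g) \<Rightarrow> ('l \<times> 'g \<times> 'i) \<Rightarrow> ('l \<times> 'g \<times> 'i)" where
  "rees_inv G P x = (case x of (l, g, i) \<Rightarrow>
      (l, inv\<^bsub>G\<^esub> (P i l) \<otimes>\<^bsub>G\<^esub> inv\<^bsub>G\<^esub> g \<otimes>\<^bsub>G\<^esub> inv\<^bsub>G\<^esub> (P i l), i))"

definition rees_data ::
  "('g, 'b) monoid_scheme \<Rightarrow> ('i \<Rightarrow> 'l \<Rightarrow> 'g) \<Rightarrow> 'l set \<Rightarrow> 'i set \<Rightarrow> 'l \<Rightarrow> 'i \<Rightarrow> bool" where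
  "rees_data G P Lam I l1 i1 \<longleftrightarrow> group G \<and> l1 \<in> Lam \<and> i1 \<in> I \<and>
     (\<forall>i\<in>I. \<forall>l\<in>Lam. P i l \<in> carrier G) \<and>
     (\<forall>l\<in>Lam. P i1 l = \<one>\<^bsub>G\<^esub>) \<and> (\<forall>i\<in>I. P i l1 = \<one>\<^bsub>G\<^esub>)"

datatype 'c sterm = SVar nat | SConst 'c | SMul "'c sterm" "'c sterm" | SInv "'c sterm"

fun svars :: "'c sterm \<Rightarrow> nat set" where
  "svars (SVar k) = {k}"
| "svars (SConst c) = {}"
| "svars (SMul t s) = svars t \<union> svars s"
| "svars (SInv t) = svars t"

fun sconsts :: "'c sterm \<Rightarrow> 'c set" where
  "sconsts (SVar k) = {}"
| "sconsts (SConst c) = {c}"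
| "sconsts (SMul t s) = sconsts t \<union> sconsts s"
| "sconsts (SInv t) = sconsts t"

fun seval :: "('g, 'b) monoid_scheme \<Rightarrow> ('i \<Rightarrow> 'l \<Rightarrow> 'g) \<Rightarrow> ('l \<times> 'g \<times> 'i) list
      \<Rightarrow> ('l \<times> 'g \<times> 'i) sterm \<Rightarrow> ('l \<times> 'g \<times> 'i)" where
  "seval G P xs (SVar k) = xs ! k"
| "seval G P xs (SConst c) = c"
| "seval G P xs (SMul t s) = rees_mult G P (seval G P xs t) (seval G P xs s)"
| "seval G P xs (SInv t) = rees_inv G P (seval G P xs t)"

definition s_algebraic ::
  "('g, 'b) monoid_scheme \<Rightarrow> ('i \<Rightarrow> 'l \<Rightarrow> 'g) \<Rightarrow> 'l set \<Rightarrow> 'i set \<Rightarrow> nat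
     \<Rightarrow> ('l \<times> 'g \<times> 'i) list set \<Rightarrow> bool" where
  "s_algebraic G P Lam I n Y \<longleftrightarrow>
    (\<exists>E :: (('l \<times> 'g \<times> 'i) sterm \<times> ('l \<times> 'g \<times> 'i) sterm) set.
       (\<forall>(t, s)\<in>E. svars t \<union> svars s \<subseteq> {..<n} \<and>
                    sconsts t \<union> sconsts s \<subseteq> rees_carrier G Lam I) \<and>
       Y = {xs. length xs = n \<and> set xs \<subseteq> rees_carrier G Lam I \<and>
                (\<forall>(t, s)\<in>E. seval G P xs t = seval G P xs s)})"

definition s_equational_domain ::
  "('g, 'b) monoid_scheme \<Rightarrow> ('i \<Rightarrow> 'l \<Rightarrow> 'g) \<Rightarrow> 'l set \<Rightarrow> 'i set \<Rightarrow> bool" where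
  "s_equational_domain G P Lam I \<longleftrightarrow>
    (\<forall>n Y1 Y2. s_algebraic G P Lam I n Y1 \<longrightarrow> s_algebraic G P Lam I n Y2 \<longrightarrow>
               s_algebraic G P Lam I n (Y1 \<union> Y2))"

datatype 'c gterm = GVar nat | GConst 'c | GOne | GMul "'c gterm" "'c gterm" | GInv "'c gterm"

fun gvars :: "'c gterm \<Rightarrow> nat set" where
  "gvars (GVar k) = {k}"
| "gvars (GConst c) = {}"
| "gvars GOne = {}"
| "gvars (GMul t s) = gvars t \<union> gvars s"
| "gvars (GInv t) = gvars t"

fun gconsts :: "'c gterm \<Rightarrow> 'c set" where
  "gconsts (GVar k) = {}"
| "gconsts (GConst c) = {c}"
| "gconsts GOne = {}"
| "gconsts (GMul t s) = gconsts t \<union> gconsts s"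
| "gconsts (GInv t) = gconsts t"

fun geval :: "('g, 'b) monoid_scheme \<Rightarrow> 'g list \<Rightarrow> 'g gterm \<Rightarrow> 'g" where
  "geval G xs (GVar k) = xs ! k"
| "geval G xs (GConst c) = c"
| "geval G xs GOne = \<one>\<^bsub>G\<^esub>"
| "geval G xs (GMul t s) = geval G xs t \<otimes>\<^bsub>G\<^esub> geval G xs s"
| "geval G xs (GInv t) = inv\<^bsub>G\<^esub> (geval G xs t)"

definition g_algebraic :: "('g, 'b) monoid_scheme \<Rightarrow> nat \<Rightarrow> 'g list set \<Rightarrow> bool" where
  "g_algebraic G n Y \<longleftrightarrow>
    (\<exists>E :: ('g gterm \<times> 'g gterm) set.
       (\<forall>(t, s)\<in>E. gvars t \<union> gvars s \<subseteq> {..<n} \<and> gconsts t \<union> gconsts s \<subseteq> carrier G) \<and>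
       Y = {xs. length xs = n \<and> set xs \<subseteq> carrier G \<and>
                (\<forall>(t, s)\<in>E. geval G xs t = geval G xs s)})"

definition g_equational_domain :: "('g, 'b) monoid_scheme \<Rightarrow> bool" where
  "g_equational_domain G \<longleftrightarrow>
    (\<forall>n Y1 Y2. g_algebraic G n Y1 \<longrightarrow> g_algebraic G n Y2 \<longrightarrow> g_algebraic G n (Y1 \<union> Y2))"

end

theory Submission
  imports Defs
begin

text \<open>
  Let S = (G,P,Lambda,I) be completely simple with normalised sandwich matrix, so that
  p_{i1 l1} = 1. The map g \<mapsto> (l1, g, i1) embeds G into S as the subgroup
  H = {(l1, g, i1)}; we write embed for its coordinatewise extension G^n \<rightarrow> S^n.

  (1) Every group term translates into an L_S-term (variables stay variables, constants
      c become (l1, c, i1)) whose value at embed gs is the embedding of its value at gs.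
  (2) Every L_S-term t translates into a group term whose value at gs is the middle
      coordinate of t at embed gs; the outer coordinates of t at embed gs are constants
      lamS t and idxS t determined by t alone.
  (3) By (1), embed maps G-algebraic sets onto S-algebraic sets: add the equations
      x_k = e x_k e with e = (l1, 1, i1), whose solutions in S are exactly the points of H.
  (4) By (2), a nonempty Y \<subseteq> G^n whose embedding is S-algebraic is G-algebraic: a point
      of the embedding forces lamS and idxS to agree on both sides of every equation.
  Hence a union of two G-algebraic sets embeds as a union of two S-algebraic sets, which is
  S-algebraic when S is an equational domain, and so it is G-algebraic by (4).
\<close>

definition g_system :: "('g, 'b) monoid_scheme \<Rightarrow> nat \<Rightarrow> ('g gterm \<times> 'g gterm) set \<Rightarrow> bool" where
  "g_system G n E \<longleftrightarrow>
     (\<forall>(t, s)\<in>E. gvars t \<union> gvars s \<subseteq> {..<n} \<and> gconsts t \<union> gconsts s \<subseteq> carrier G)"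

definition g_solutions :: "('g, 'b) monoid_scheme \<Rightarrow> nat \<Rightarrow> ('g gterm \<times> 'g gterm) set \<Rightarrow> 'g list set" where
  "g_solutions G n E = {xs. length xs = n \<and> set xs \<subseteq> carrier G \<and>
                            (\<forall>(t, s)\<in>E. geval G xs t = geval G xs s)}"

lemma g_algebraic_iff: "g_algebraic G n Y \<longleftrightarrow> (\<exists>E. g_system G n E \<and> Y = g_solutions G n E)"
  by (simp add: g_algebraic_def g_system_def g_solutions_def)

definition s_system ::
  "('g, 'b) monoid_scheme \<Rightarrow> 'l set \<Rightarrow> 'i set \<Rightarrow> nat
     \<Rightarrow> (('l \<times> 'g \<times> 'i) sterm \<times> ('l \<times> 'g \<times> 'i) sterm) set \<Rightarrow> bool" where
  "s_system G Lam I n E \<longleftrightarrow>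
     (\<forall>(t, s)\<in>E. svars t \<union> svars s \<subseteq> {..<n} \<and> sconsts t \<union> sconsts s \<subseteq> rees_carrier G Lam I)"

definition s_solutions ::
  "('g, 'b) monoid_scheme \<Rightarrow> ('i \<Rightarrow> 'l \<Rightarrow> 'g) \<Rightarrow> 'l set \<Rightarrow> 'i set \<Rightarrow> nat
     \<Rightarrow> (('l \<times> 'g \<times> 'i) sterm \<times> ('l \<times> 'g \<times> 'i) sterm) set \<Rightarrow> ('l \<times> 'g \<times> 'i) list set" where
  "s_solutions G P Lam I n E = {xs. length xs = n \<and> set xs \<subseteq> rees_carrier G Lam I \<and>
                                    (\<forall>(t, s)\<in>E. seval G P xs t = seval G P xs s)}"

lemma s_algebraic_iff:
  "s_algebraic G P Lam I n Y \<longleftrightarrow> (\<exists>E. s_system G Lam I n E \<and> Y = s_solutions G P Lam I n E)"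
  by (simp add: s_algebraic_def s_system_def s_solutions_def)

lemma geval_closed:
  assumes "group G" "set xs \<subseteq> carrier G" "gvars t \<subseteq> {..<length xs}" "gconsts t \<subseteq> carrier G"
  shows "geval G xs t \<in> carrier G"
  using assms(3,4) by (induction t) (use assms(1,2) in \<open>auto simp: group.inv_closed
      monoid.m_closed group.is_monoid monoid.one_closed nth_mem subset_iff\<close>)

definition embed :: "'l \<Rightarrow> 'i \<Rightarrow> 'g list \<Rightarrow> ('l \<times> 'g \<times> 'i) list" where
  "embed l1 i1 = map (\<lambda>g. (l1, g, i1))"

lemma inj_embed: "inj (embed l1 i1)"
  unfolding embed_def by (rule inj_mapI) (auto simp: inj_def)

lemma length_embed [simp]: "length (embed l1 i1 gs) = length gs"
  by (simp add: embed_def)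

lemma nth_embed [simp]: "k < length gs \<Longrightarrow> embed l1 i1 gs ! k = (l1, gs ! k, i1)"
  by (simp add: embed_def)

lemma embed_in_carrier:
  assumes "l1 \<in> Lam" "i1 \<in> I" "set gs \<subseteq> carrier G"
  shows "set (embed l1 i1 gs) \<subseteq> rees_carrier G Lam I"
  using assms by (auto simp: embed_def rees_carrier_def)

lemma embed_middle:
  assumes "\<forall>x\<in>set xs. fst x = l1 \<and> snd (snd x) = i1"
  shows "xs = embed l1 i1 (map (fst \<circ> snd) xs)"
  using assms by (induction xs) (auto simp: embed_def)

fun trG :: "('g, 'b) monoid_scheme \<Rightarrow> 'l \<Rightarrow> 'i \<Rightarrow> 'g gterm \<Rightarrow> ('l \<times> 'g \<times> 'i) sterm" where
  "trG G l1 i1 (GVar k) = SVar k"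
| "trG G l1 i1 (GConst c) = SConst (l1, c, i1)"
| "trG G l1 i1 GOne = SConst (l1, \<one>\<^bsub>G\<^esub>, i1)"
| "trG G l1 i1 (GMul t s) = SMul (trG G l1 i1 t) (trG G l1 i1 s)"
| "trG G l1 i1 (GInv t) = SInv (trG G l1 i1 t)"

lemma trG_vars: "svars (trG G l1 i1 t) = gvars t"
  by (induction t) auto

lemma trG_consts:
  assumes "group G" "l1 \<in> Lam" "i1 \<in> I" "gconsts t \<subseteq> carrier G"
  shows "sconsts (trG G l1 i1 t) \<subseteq> rees_carrier G Lam I"
  using assms by (induction t) (auto simp: rees_carrier_def group.is_monoid monoid.one_closed)

lemma trG_system:
  assumes "group G" "l1 \<in> Lam" "i1 \<in> I" "g_system G n E"
  shows "s_system G Lam I n (map_prod (trG G l1 i1) (trG G l1 i1) ` E)"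
  unfolding s_system_def
proof (intro ballI)
  fix x assume "x \<in> map_prod (trG G l1 i1) (trG G l1 i1) ` E"
  then obtain t s where ts: "(t, s) \<in> E" "x = (trG G l1 i1 t, trG G l1 i1 s)" by auto
  have "gvars t \<union> gvars s \<subseteq> {..<n}" "gconsts t \<subseteq> carrier G" "gconsts s \<subseteq> carrier G"
    using assms(4) ts(1) by (auto simp: g_system_def)
  then show "case x of (t, s) \<Rightarrow> svars t \<union> svars s \<subseteq> {..<n} \<and>
                 sconsts t \<union> sconsts s \<subseteq> rees_carrier G Lam I"
    using trG_consts[OF assms(1-3)] ts(2) by (simp add: trG_vars)
qed

text \<open>Since p_{i1 l1} = 1, the set H is a subgroup of S isomorphic to G via g \<mapsto> (l1, g, i1);
  hence evaluating the translated term at an embedded tuple embeds the group value.\<close>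

lemma seval_trG:
  assumes grp: "group G" and P11: "P i1 l1 = \<one>\<^bsub>G\<^esub>" and gs: "set gs \<subseteq> carrier G"
    and "gvars t \<subseteq> {..<length gs}" and "gconsts t \<subseteq> carrier G"
  shows "seval G P (embed l1 i1 gs) (trG G l1 i1 t) = (l1, geval G gs t, i1)"
  using assms(4,5)
proof (induction t)
  case (GMul t s)
  then show ?case using geval_closed[OF grp gs, of t] P11 grp
    by (auto simp: rees_mult_def group.is_monoid monoid.r_one)
next
  case (GInv t)
  have "geval G gs t \<in> carrier G" using GInv.prems geval_closed[OF grp gs] by simp
  then show ?case using GInv P11 grp
    by (auto simp: rees_inv_def group.inv_closed group.is_monoid monoid.inv_one
        monoid.l_one monoid.r_one)
qed (auto simp: embed_def)

text \<open>The first and last coordinates of the value of a semigroup term at a tuple of points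
  of H do not depend on the tuple.\<close>

fun lamS :: "'l \<Rightarrow> ('l \<times> 'g \<times> 'i) sterm \<Rightarrow> 'l" where
  "lamS l1 (SVar k) = l1"
| "lamS l1 (SConst c) = fst c"
| "lamS l1 (SMul t s) = lamS l1 t"
| "lamS l1 (SInv t) = lamS l1 t"

fun idxS :: "'i \<Rightarrow> ('l \<times> 'g \<times> 'i) sterm \<Rightarrow> 'i" where
  "idxS i1 (SVar k) = i1"
| "idxS i1 (SConst c) = snd (snd c)"
| "idxS i1 (SMul t s) = idxS i1 s"
| "idxS i1 (SInv t) = idxS i1 t"

lemma lamS_idxS_in:
  assumes "l1 \<in> Lam" "i1 \<in> I" "sconsts t \<subseteq> rees_carrier G Lam I"
  shows "lamS l1 t \<in> Lam" "idxS i1 t \<in> I"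
  using assms(3) by (induction t) (auto simp: assms(1,2) rees_carrier_def)

text \<open>The middle coordinate, as a group term: sandwich entries become constants.\<close>

fun trS :: "('i \<Rightarrow> 'l \<Rightarrow> 'g) \<Rightarrow> 'l \<Rightarrow> 'i \<Rightarrow> ('l \<times> 'g \<times> 'i) sterm \<Rightarrow> 'g gterm" where
  "trS P l1 i1 (SVar k) = GVar k"
| "trS P l1 i1 (SConst c) = GConst (fst (snd c))"
| "trS P l1 i1 (SMul t s) =
     GMul (GMul (trS P l1 i1 t) (GConst (P (idxS i1 t) (lamS l1 s)))) (trS P l1 i1 s)"
| "trS P l1 i1 (SInv t) =
     GMul (GMul (GInv (GConst (P (idxS i1 t) (lamS l1 t)))) (GInv (trS P l1 i1 t)))
          (GInv (GConst (P (idxS i1 t) (lamS l1 t))))"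

lemma trS_vars: "gvars (trS P l1 i1 t) \<subseteq> svars t"
  by (induction t) auto

lemma trS_consts:
  assumes "l1 \<in> Lam" "i1 \<in> I" "\<forall>i\<in>I. \<forall>l\<in>Lam. P i l \<in> carrier G"
    and "sconsts t \<subseteq> rees_carrier G Lam I"
  shows "gconsts (trS P l1 i1 t) \<subseteq> carrier G"
  using assms(4)
  by (induction t) (use assms(1-3) lamS_idxS_in[OF assms(1,2), where G=G] in \<open>auto simp: rees_carrier_def\<close>)

lemma trS_system:
  assumes "l1 \<in> Lam" "i1 \<in> I" "\<forall>i\<in>I. \<forall>l\<in>Lam. P i l \<in> carrier G" "s_system G Lam I n E"
  shows "g_system G n (map_prod (trS P l1 i1) (trS P l1 i1) ` E)"
  unfolding g_system_def
proof (intro ballI)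
  fix x assume "x \<in> map_prod (trS P l1 i1) (trS P l1 i1) ` E"
  then obtain t s where ts: "(t, s) \<in> E" "x = (trS P l1 i1 t, trS P l1 i1 s)" by auto
  have "svars t \<union> svars s \<subseteq> {..<n}" "sconsts t \<subseteq> rees_carrier G Lam I"
    "sconsts s \<subseteq> rees_carrier G Lam I"
    using assms(4) ts(1) by (auto simp: s_system_def)
  then show "case x of (t, s) \<Rightarrow> gvars t \<union> gvars s \<subseteq> {..<n} \<and>
                 gconsts t \<union> gconsts s \<subseteq> carrier G"
    using trS_consts[OF assms(1-3)] trS_vars[of P l1 i1 t] trS_vars[of P l1 i1 s] ts(2) by auto
qed

text \<open>The value of an L_S-term at a point of H^n, coordinate by coordinate. No group law is
  needed: the Rees product and inverse are unfolded verbatim.\<close>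

lemma seval_trS:
  assumes "svars t \<subseteq> {..<length gs}"
  shows "seval G P (embed l1 i1 gs) t = (lamS l1 t, geval G gs (trS P l1 i1 t), idxS i1 t)"
  using assms by (induction t) (auto simp: embed_def rees_mult_def rees_inv_def)

lemma sandwich_fixed_iff:
  assumes "group G" "P i1 l1 = \<one>\<^bsub>G\<^esub>" "g \<in> carrier G"
  shows "(l, g, i) = rees_mult G P (rees_mult G P (l1, \<one>\<^bsub>G\<^esub>, i1) (l, g, i)) (l1, \<one>\<^bsub>G\<^esub>, i1)
         \<longleftrightarrow> l = l1 \<and> i = i1"
  using assms by (auto simp: rees_mult_def group.is_monoid monoid.l_one monoid.r_one)

definition confine ::
  "('g, 'b) monoid_scheme \<Rightarrow> 'l \<Rightarrow> 'i \<Rightarrow> nat \<Rightarrow> (('l \<times> 'g \<times> 'i) sterm \<times> ('l \<times> 'g \<times> 'i) sterm) set"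
  where "confine G l1 i1 n =
    {(SVar k, SMul (SMul (SConst (l1, \<one>\<^bsub>G\<^esub>, i1)) (SVar k)) (SConst (l1, \<one>\<^bsub>G\<^esub>, i1))) | k. k < n}"

lemma confine_system:
  assumes "group G" "l1 \<in> Lam" "i1 \<in> I"
  shows "s_system G Lam I n (confine G l1 i1 n)"
  using assms by (auto simp: s_system_def confine_def rees_carrier_def group.is_monoid monoid.one_closed)

lemma s_solutions_confine:
  assumes grp: "group G" and l1: "l1 \<in> Lam" and i1: "i1 \<in> I" and P11: "P i1 l1 = \<one>\<^bsub>G\<^esub>"
  shows "s_solutions G P Lam I n (confine G l1 i1 n)
           = embed l1 i1 ` {gs. length gs = n \<and> set gs \<subseteq> carrier G}"
proof (intro Set.set_eqI iffI)
  fix xs assume xs: "xs \<in> s_solutions G P Lam I n (confine G l1 i1 n)"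
  have "fst x = l1 \<and> snd (snd x) = i1" if "x \<in> set xs" for x
  proof -
    obtain k where k: "k < n" "x = xs ! k"
      using \<open>x \<in> set xs\<close> xs by (auto simp: s_solutions_def in_set_conv_nth)
    obtain l g i where x: "x = (l, g, i)" "g \<in> carrier G"
      using \<open>x \<in> set xs\<close> xs by (auto simp: s_solutions_def rees_carrier_def)
    have "xs ! k = rees_mult G P (rees_mult G P (l1, \<one>\<^bsub>G\<^esub>, i1) (xs ! k)) (l1, \<one>\<^bsub>G\<^esub>, i1)"
      using xs k(1) by (force simp: s_solutions_def confine_def)
    then show ?thesis using sandwich_fixed_iff[of G P i1 l1, OF grp P11 x(2)] x k by simp
  qed
  then have "xs = embed l1 i1 (map (fst \<circ> snd) xs)" by (intro embed_middle) blast
  moreover have "map (fst \<circ> snd) xs \<in> {gs. length gs = n \<and> set gs \<subseteq> carrier G}"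
    using xs by (auto simp: s_solutions_def rees_carrier_def)
  ultimately show "xs \<in> embed l1 i1 ` {gs. length gs = n \<and> set gs \<subseteq> carrier G}"
    by (rule image_eqI)
next
  fix xs assume "xs \<in> embed l1 i1 ` {gs. length gs = n \<and> set gs \<subseteq> carrier G}"
  then obtain gs where gs: "length gs = n" "set gs \<subseteq> carrier G" and xs: "xs = embed l1 i1 gs"
    by blast
  show "xs \<in> s_solutions G P Lam I n (confine G l1 i1 n)"
    using gs embed_in_carrier[OF l1 i1 gs(2)] sandwich_fixed_iff[of G P i1 l1, OF grp P11]
    by (auto simp: s_solutions_def confine_def xs nth_mem subset_iff)
qed

lemma embed_in_s_solutions_trG:
  assumes grp: "group G" and l1: "l1 \<in> Lam" and i1: "i1 \<in> I" and P11: "P i1 l1 = \<one>\<^bsub>G\<^esub>"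
    and E: "g_system G n E" and gs: "length gs = n" "set gs \<subseteq> carrier G"
  shows "embed l1 i1 gs \<in> s_solutions G P Lam I n (map_prod (trG G l1 i1) (trG G l1 i1) ` E)
           \<longleftrightarrow> gs \<in> g_solutions G n E"
proof -
  have eq_iff: "seval G P (embed l1 i1 gs) (trG G l1 i1 t) = seval G P (embed l1 i1 gs) (trG G l1 i1 s)
      \<longleftrightarrow> geval G gs t = geval G gs s" if ts: "(t, s) \<in> E" for t s
  proof -
    have "gvars t \<union> gvars s \<subseteq> {..<n}" "gconsts t \<subseteq> carrier G" "gconsts s \<subseteq> carrier G"
      using E ts by (auto simp: g_system_def)
    then show ?thesis using seval_trG[of G P i1 l1, OF grp P11 gs(2)] gs(1) by simp
  qed
  have "embed l1 i1 gs \<in> s_solutions G P Lam I n (map_prod (trG G l1 i1) (trG G l1 i1) ` E)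
      \<longleftrightarrow> (\<forall>(t, s)\<in>E. seval G P (embed l1 i1 gs) (trG G l1 i1 t)
                        = seval G P (embed l1 i1 gs) (trG G l1 i1 s))"
    using gs embed_in_carrier[OF l1 i1 gs(2)] by (auto simp: s_solutions_def)
  also have "\<dots> \<longleftrightarrow> gs \<in> g_solutions G n E"
    using gs eq_iff by (auto simp: g_solutions_def)
  finally show ?thesis .
qed

lemma s_solutions_Un:
  "s_solutions G P Lam I n (A \<union> B) = s_solutions G P Lam I n A \<inter> s_solutions G P Lam I n B"
  by (auto simp: s_solutions_def)

lemma s_algebraic_embed:
  assumes grp: "group G" and l1: "l1 \<in> Lam" and i1: "i1 \<in> I" and P11: "P i1 l1 = \<one>\<^bsub>G\<^esub>"
    and "g_algebraic G n Y"
  shows "s_algebraic G P Lam I n (embed l1 i1 ` Y)"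
proof -
  obtain E where E: "g_system G n E" and Y: "Y = g_solutions G n E"
    using assms(5) g_algebraic_iff by blast
  define E' where "E' = map_prod (trG G l1 i1) (trG G l1 i1) ` E \<union> confine G l1 i1 n"
  have "s_system G Lam I n E'"
    using trG_system[OF grp l1 i1 E] confine_system[OF grp l1 i1]
    unfolding E'_def s_system_def by blast
  moreover have "s_solutions G P Lam I n E' = embed l1 i1 ` Y"
  proof -
    have "s_solutions G P Lam I n E'
        = s_solutions G P Lam I n (map_prod (trG G l1 i1) (trG G l1 i1) ` E)
          \<inter> embed l1 i1 ` {gs. length gs = n \<and> set gs \<subseteq> carrier G}"
      unfolding E'_def s_solutions_Un s_solutions_confine[of G l1 Lam i1 I P, OF grp l1 i1 P11] ..
    also have "\<dots> = embed l1 i1 ` g_solutions G n E"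
      using embed_in_s_solutions_trG[of G l1 Lam i1 I P, OF grp l1 i1 P11 E] by (auto simp: g_solutions_def)
    finally show ?thesis unfolding Y .
  qed
  ultimately show ?thesis unfolding s_algebraic_iff by (intro exI[of _ E'] conjI) simp_all
qed

text \<open>At a point of H^n that solves an L_S-system, both sides of every equation have the same
  outer coordinates; since these do not depend on the point, this holds on all of H^n.\<close>

lemma shape_of_s_solution:
  assumes E: "s_system G Lam I n E" and w: "embed l1 i1 w \<in> s_solutions G P Lam I n E"
    and ts: "(t, s) \<in> E"
  shows "lamS l1 t = lamS l1 s \<and> idxS i1 t = idxS i1 s"
proof -
  have "seval G P (embed l1 i1 w) t = seval G P (embed l1 i1 w) s"
    using w ts unfolding s_solutions_def by blast
  moreover have "svars t \<subseteq> {..<length w}" "svars s \<subseteq> {..<length w}"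
    using E w ts by (auto simp: s_system_def s_solutions_def)
  ultimately show ?thesis by (simp add: seval_trS)
qed

lemma embed_in_s_solutions_iff_trS:
  assumes l1: "l1 \<in> Lam" and i1: "i1 \<in> I" and E: "s_system G Lam I n E"
    and shape: "\<forall>(t, s)\<in>E. lamS l1 t = lamS l1 s \<and> idxS i1 t = idxS i1 s"
    and gs: "length gs = n" "set gs \<subseteq> carrier G"
  shows "embed l1 i1 gs \<in> s_solutions G P Lam I n E
           \<longleftrightarrow> gs \<in> g_solutions G n (map_prod (trS P l1 i1) (trS P l1 i1) ` E)"
proof -
  have eq_iff: "seval G P (embed l1 i1 gs) t = seval G P (embed l1 i1 gs) s \<longleftrightarrow>
      geval G gs (trS P l1 i1 t) = geval G gs (trS P l1 i1 s)" if ts: "(t, s) \<in> E" for t s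
  proof -
    have "svars t \<subseteq> {..<n}" "svars s \<subseteq> {..<n}" using E ts by (auto simp: s_system_def)
    then show ?thesis using shape ts gs(1) by (auto simp: seval_trS)
  qed
  have "embed l1 i1 gs \<in> s_solutions G P Lam I n E
      \<longleftrightarrow> (\<forall>(t, s)\<in>E. seval G P (embed l1 i1 gs) t = seval G P (embed l1 i1 gs) s)"
    using gs embed_in_carrier[OF l1 i1 gs(2)] by (simp add: s_solutions_def)
  also have "\<dots> \<longleftrightarrow> (\<forall>(t, s)\<in>E. geval G gs (trS P l1 i1 t) = geval G gs (trS P l1 i1 s))"
    using eq_iff by blast
  also have "\<dots> \<longleftrightarrow> gs \<in> g_solutions G n (map_prod (trS P l1 i1) (trS P l1 i1) ` E)"
    using gs by (auto simp: g_solutions_def)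
  finally show ?thesis .
qed

text \<open>Conversely, a nonempty Y \<subseteq> G^n whose embedding is S-algebraic is G-algebraic: a point
  of Y fixes the outer coordinates of each equation, and the translated group system
  compares the middle coordinates.\<close>

lemma g_algebraic_of_embed:
  assumes l1: "l1 \<in> Lam" and i1: "i1 \<in> I" and Pc: "\<forall>i\<in>I. \<forall>l\<in>Lam. P i l \<in> carrier G"
    and alg: "s_algebraic G P Lam I n (embed l1 i1 ` Y)"
    and w: "w \<in> Y" and Ysub: "Y \<subseteq> {gs. length gs = n \<and> set gs \<subseteq> carrier G}"
  shows "g_algebraic G n Y"
proof -
  obtain E where E: "s_system G Lam I n E" and Z: "embed l1 i1 ` Y = s_solutions G P Lam I n E"
    using alg s_algebraic_iff by blast
  define E' where "E' = map_prod (trS P l1 i1) (trS P l1 i1) ` E"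
  have "embed l1 i1 w \<in> s_solutions G P Lam I n E" unfolding Z[symmetric] using w by (rule imageI)
  then have shape: "\<forall>(t, s)\<in>E. lamS l1 t = lamS l1 s \<and> idxS i1 t = idxS i1 s"
    using shape_of_s_solution[OF E] by blast
  have "Y = g_solutions G n E'"
  proof (intro Set.set_eqI)
    fix gs
    show "gs \<in> Y \<longleftrightarrow> gs \<in> g_solutions G n E'"
    proof (cases "length gs = n \<and> set gs \<subseteq> carrier G")
      case True
      have "gs \<in> Y \<longleftrightarrow> embed l1 i1 gs \<in> s_solutions G P Lam I n E"
        unfolding Z[symmetric] by (rule inj_image_mem_iff[OF inj_embed, symmetric])
      then show ?thesis
        unfolding E'_def using embed_in_s_solutions_iff_trS[OF l1 i1 E shape] True by blast
    next
      case False
      then show ?thesis using Ysub by (auto simp: g_solutions_def)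
    qed
  qed
  moreover have "g_system G n E'" unfolding E'_def by (rule trS_system[OF l1 i1 Pc E])
  ultimately show ?thesis unfolding g_algebraic_iff by blast
qed

theorem mainTheorem3:
  fixes G :: "('g, 'b) monoid_scheme" and P :: "'i \<Rightarrow> 'l \<Rightarrow> 'g"
    and Lam :: "'l set" and I :: "'i set" and l1 :: 'l and i1 :: 'i
  assumes "rees_data G P Lam I l1 i1"
    and "s_equational_domain G P Lam I"
  shows "g_equational_domain G"
  unfolding g_equational_domain_def
proof (intro allI impI)
  fix n Y1 Y2 assume Y1: "g_algebraic G n Y1" and Y2: "g_algebraic G n Y2"
  have grp: "group G" and l1: "l1 \<in> Lam" and i1: "i1 \<in> I" and P11: "P i1 l1 = \<one>\<^bsub>G\<^esub>"
    and Pc: "\<forall>i\<in>I. \<forall>l\<in>Lam. P i l \<in> carrier G"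
    using assms(1) by (auto simp: rees_data_def)
  show "g_algebraic G n (Y1 \<union> Y2)"
  proof (cases "Y1 \<union> Y2 = {}")
    case True then show ?thesis using Y1 by simp
  next
    case False
    then obtain w where w: "w \<in> Y1 \<union> Y2" by blast
    have "s_algebraic G P Lam I n (embed l1 i1 ` Y1 \<union> embed l1 i1 ` Y2)"
      using assms(2) s_algebraic_embed[of G l1 Lam i1 I P, OF grp l1 i1 P11] Y1 Y2
      unfolding s_equational_domain_def by blast
    then have "s_algebraic G P Lam I n (embed l1 i1 ` (Y1 \<union> Y2))" by (simp add: image_Un)
    moreover have "Y1 \<union> Y2 \<subseteq> {gs. length gs = n \<and> set gs \<subseteq> carrier G}"
      using Y1 Y2 by (auto simp: g_algebraic_iff g_solutions_def)
    ultimately show ?thesis using g_algebraic_of_embed[OF l1 i1 Pc _ w] by blast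
  qed
qed

end
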